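(* Let $\mathcal H$ be a complex separable Hilbert space, let $\mathcal A=(A_n)_{n\ge0}$ be a sequence of positive invertible bounded operators on $\mathcal H$ with $\sup_n\|A_n\|<\infty$, and suppose the operator-valued weighted shift $W_{\mathcal A}$ on $\ell^2(\mathcal H)$ is quadratically hyponormal. If $A_n=A_{n+1}=A_{n+2}$ for some $n\ge0$, then $A_k=A_n$ for every $k\ge1$.
   Context: $\ell^2(\mathcal H)=\{(x_n)_{n\ge0}: x_n\in\mathcal H,\ \sum_n\|x_n\|^2<\infty\}$; the operator-valued weighted shift is $W_{\mathcal A}(x_0,x_1,\dots)=(0,A_0x_0,A_1x_1,\dots)$. A bounded operator $T$ is hyponormal if $T^*T-TT^*\ge0$, and quadratically hyponormal if $T+\lambda T^2$ is hyponormal for every $\lambda\in\mathbb C$. *)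

theory Defs
  imports "HOL-Analysis.Analysis"
begin

class complex_vector = real_vector +
  fixes scaleC :: "complex \<Rightarrow> 'a \<Rightarrow> 'a" (infixr \<open>*\<^sub>C\<close> 75)
  assumes scaleC_add_right: "a *\<^sub>C (x + y) = a *\<^sub>C x + a *\<^sub>C y"
    and scaleC_add_left: "(a + b) *\<^sub>C x = a *\<^sub>C x + b *\<^sub>C x"
    and scaleC_scaleC: "a *\<^sub>C (b *\<^sub>C x) = (a * b) *\<^sub>C x"
    and scaleC_one: "1 *\<^sub>C x = x"
    and scaleR_scaleC: "scaleR r x = complex_of_real r *\<^sub>C x"

class complex_inner = complex_vector + real_normed_vector +
  fixes cinner :: "'a \<Rightarrow> 'a \<Rightarrow> complex"
  assumes cinner_commute: "cinner x y = cnj (cinner y x)"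
    and cinner_add_left: "cinner (x + y) z = cinner x z + cinner y z"
    and cinner_scaleC_left: "cinner (r *\<^sub>C x) y = cnj r * cinner x y"
    and cinner_ge_zero: "0 \<le> Re (cinner x x)"
    and cinner_eq_zero_iff: "cinner x x = 0 \<longleftrightarrow> x = 0"
    and norm_eq_sqrt_cinner: "norm x = sqrt (Re (cinner x x))"

class chilbert_space = complex_inner + complete_space

definition bounded_clinear :: "('a::complex_inner \<Rightarrow> 'b::complex_inner) \<Rightarrow> bool" where
  "bounded_clinear T \<longleftrightarrow>
     (\<forall>x y. T (x + y) = T x + T y) \<and> (\<forall>c x. T (c *\<^sub>C x) = c *\<^sub>C T x) \<and>
     (\<exists>K. \<forall>x. norm (T x) \<le> norm x * K)"

definition positive_op :: "('a::complex_inner \<Rightarrow> 'a) \<Rightarrow> bool" where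
  "positive_op A \<longleftrightarrow> bounded_clinear A \<and>
     (\<forall>x. Im (cinner (A x) x) = 0 \<and> Re (cinner (A x) x) \<ge> 0)"

definition invertible_op :: "('a::complex_inner \<Rightarrow> 'a) \<Rightarrow> bool" where
  "invertible_op A \<longleftrightarrow> bounded_clinear A \<and>
     (\<exists>B. bounded_clinear B \<and> (\<forall>x. B (A x) = x) \<and> (\<forall>x. A (B x) = x))"

definition ell2 :: "(nat \<Rightarrow> 'h::complex_inner) set" where
  "ell2 = {x. summable (\<lambda>n. (norm (x n))\<^sup>2)}"

definition l2inner :: "(nat \<Rightarrow> 'h::complex_inner) \<Rightarrow> (nat \<Rightarrow> 'h) \<Rightarrow> complex" where
  "l2inner x y = (\<Sum>n. cinner (x n) (y n))"

definition l2norm :: "(nat \<Rightarrow> 'h::complex_inner) \<Rightarrow> real" where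
  "l2norm x = sqrt (\<Sum>n. (norm (x n))\<^sup>2)"

definition l2_bounded :: "((nat \<Rightarrow> 'h::complex_inner) \<Rightarrow> (nat \<Rightarrow> 'h)) \<Rightarrow> bool" where
  "l2_bounded T \<longleftrightarrow>
     (\<forall>x\<in>ell2. T x \<in> ell2) \<and>
     (\<forall>x\<in>ell2. \<forall>y\<in>ell2. T (\<lambda>n. x n + y n) = (\<lambda>n. T x n + T y n)) \<and>
     (\<forall>c. \<forall>x\<in>ell2. T (\<lambda>n. c *\<^sub>C x n) = (\<lambda>n. c *\<^sub>C T x n)) \<and>
     (\<exists>K. \<forall>x\<in>ell2. l2norm (T x) \<le> K * l2norm x)"

definition l2_adjoint :: "((nat \<Rightarrow> 'h::complex_inner) \<Rightarrow> (nat \<Rightarrow> 'h)) \<Rightarrow> ((nat \<Rightarrow> 'h) \<Rightarrow> (nat \<Rightarrow> 'h))" where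
  "l2_adjoint T = (SOME S. (\<forall>y\<in>ell2. S y \<in> ell2) \<and>
      (\<forall>x\<in>ell2. \<forall>y\<in>ell2. l2inner (T x) y = l2inner x (S y)))"

definition l2_positive :: "((nat \<Rightarrow> 'h::complex_inner) \<Rightarrow> (nat \<Rightarrow> 'h)) \<Rightarrow> bool" where
  "l2_positive S \<longleftrightarrow> (\<forall>x\<in>ell2. Im (l2inner (S x) x) = 0 \<and> Re (l2inner (S x) x) \<ge> 0)"

definition l2_hyponormal :: "((nat \<Rightarrow> 'h::complex_inner) \<Rightarrow> (nat \<Rightarrow> 'h)) \<Rightarrow> bool" where
  "l2_hyponormal T \<longleftrightarrow> l2_bounded T \<and>
     l2_positive (\<lambda>x n. l2_adjoint T (T x) n - T (l2_adjoint T x) n)"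

definition l2_quad_hyponormal :: "((nat \<Rightarrow> 'h::complex_inner) \<Rightarrow> (nat \<Rightarrow> 'h)) \<Rightarrow> bool" where
  "l2_quad_hyponormal T \<longleftrightarrow> l2_bounded T \<and>
     (\<forall>lam::complex. l2_hyponormal (\<lambda>x n. T x n + lam *\<^sub>C T (T x) n))"

definition op_weighted_shift :: "(nat \<Rightarrow> 'h \<Rightarrow> 'h) \<Rightarrow> (nat \<Rightarrow> 'h::complex_inner) \<Rightarrow> (nat \<Rightarrow> 'h)" where
  "op_weighted_shift A x = (\<lambda>n. case n of 0 \<Rightarrow> 0 | Suc k \<Rightarrow> A k (x k))"

end

theory Submission
  imports Defs
begin

text \<open>For \<open>t > 0\<close>, hyponormality of \<open>T = W + t W\<^sup>2\<close> gives
  \<open>\<parallel>T\<^sup>* x\<parallel> \<le> \<parallel>T x\<parallel>\<close>; for \<open>x\<close> supported on three consecutive coordinates both sides are finite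
  sums. Next to a block of three equal weights \<open>B\<close>, a test vector is chosen for which most entries of
  \<open>T x\<close> cancel, and expanding \<open>\<parallel>T\<^sup>* x\<parallel>\<^sup>2\<close> with the positivity of \<open>B\<close> bounds \<open>t\<^sup>4\<close> times a squared
  defect by \<open>t\<^sup>6\<close> times a constant. Letting \<open>t \<rightarrow> 0\<close> shows that the neighbouring weight and \<open>B\<close>
  have the same square on the range of the invertible \<open>B\<close>, hence everywhere, and uniqueness of
  positive square roots makes them equal. Induction spreads the block in both directions; the
  step to the left of index \<open>k\<close> uses the weight \<open>A (k - 1)\<close>, so it stops at \<open>k = 1\<close>.\<close>

section \<open>Complex inner product spaces\<close>

lemma cinner_add_right: "cinner x (y + z) = cinner x y + cinner (x::'a::complex_inner) z"
  by (subst (1 2 3) cinner_commute) (simp add: cinner_add_left)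

lemma cinner_scaleC_right: "cinner x (r *\<^sub>C y) = r * cinner (x::'a::complex_inner) y"
  by (subst (1 2) cinner_commute) (simp add: cinner_scaleC_left)

lemma cinner_scaleR_left: "cinner (r *\<^sub>R x) (y::'a::complex_inner) = complex_of_real r * cinner x y"
  by (simp add: scaleR_scaleC cinner_scaleC_left)

lemma cinner_scaleR_right: "cinner x (r *\<^sub>R y::'a::complex_inner) = complex_of_real r * cinner x y"
  by (simp add: scaleR_scaleC cinner_scaleC_right)

lemma cinner_zero_left [simp]: "cinner 0 (y::'a::complex_inner) = 0"
  using cinner_scaleR_left[of 0 y y] by simp

lemma cinner_zero_right [simp]: "cinner (x::'a::complex_inner) 0 = 0"
  using cinner_scaleR_right[of x 0 x] by simp

lemma cinner_minus_left: "cinner (- x) (y::'a::complex_inner) = - cinner x y"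
  using cinner_scaleR_left[of "-1" x y] by simp

lemma cinner_minus_right: "cinner x (- y::'a::complex_inner) = - cinner x y"
  using cinner_scaleR_right[of x "-1" y] by simp

lemma cinner_diff_left: "cinner (x - z) (y::'a::complex_inner) = cinner x y - cinner z y"
  by (simp only: diff_conv_add_uminus cinner_add_left cinner_minus_left)

lemma cinner_diff_right: "cinner x (y - z::'a::complex_inner) = cinner x y - cinner x z"
  by (simp only: diff_conv_add_uminus cinner_add_right cinner_minus_right)

lemma Im_cinner_self [simp]: "Im (cinner x (x::'a::complex_inner)) = 0"
  using arg_cong[OF cinner_commute[of x x], of Im] by simp

lemma Re_cinner_commute: "Re (cinner x (y::'a::complex_inner)) = Re (cinner y x)"
  by (subst cinner_commute) simp

lemma power2_norm_eq_cinner: "(norm (x::'a::complex_inner))\<^sup>2 = Re (cinner x x)"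
  by (simp add: norm_eq_sqrt_cinner cinner_ge_zero)

lemma power2_norm_add:
  "(norm (x + y::'a::complex_inner))\<^sup>2 = (norm x)\<^sup>2 + (norm y)\<^sup>2 + 2 * Re (cinner x y)"
  by (simp add: power2_norm_eq_cinner cinner_add_left cinner_add_right Re_cinner_commute[of y x])

lemma power2_norm_diff:
  "(norm (x - y::'a::complex_inner))\<^sup>2 = (norm x)\<^sup>2 + (norm y)\<^sup>2 - 2 * Re (cinner x y)"
  by (simp add: power2_norm_eq_cinner cinner_diff_left cinner_diff_right Re_cinner_commute[of y x])

lemma norm_scaleC: "norm (c *\<^sub>C (x::'a::complex_inner)) = cmod c * norm x"
proof -
  have "(norm (c *\<^sub>C x))\<^sup>2 = Re ((cnj c * c) * cinner x x)"
    by (simp add: power2_norm_eq_cinner cinner_scaleC_left cinner_scaleC_right algebra_simps)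
  also have "cnj c * c = complex_of_real ((cmod c)\<^sup>2)"
    by (metis complex_norm_square mult.commute of_real_power)
  finally have "(norm (c *\<^sub>C x))\<^sup>2 = (cmod c * norm x)\<^sup>2"
    by (simp add: power2_norm_eq_cinner power_mult_distrib)
  thus ?thesis by (simp add: power2_eq_iff_nonneg)
qed

lemma two_mult_Re_cinner_le:
  "2 * r * Re (cinner x (y::'a::complex_inner)) \<le> (norm x)\<^sup>2 + r\<^sup>2 * (norm y)\<^sup>2"
  using zero_le_power2[of "norm (x - r *\<^sub>R y)"]
  by (simp add: power2_norm_diff cinner_scaleR_right power_mult_distrib)

lemma cmod_cinner_le: "cmod (cinner x (y::'a::complex_inner)) \<le> (norm x)\<^sup>2 + (norm y)\<^sup>2"
proof -
  have "2 * \<bar>Re (cinner x y)\<bar> \<le> (norm x)\<^sup>2 + (norm y)\<^sup>2"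
    using two_mult_Re_cinner_le[of 1 x y] two_mult_Re_cinner_le[of "-1" x y] by simp
  moreover have "2 * \<bar>Im (cinner x y)\<bar> \<le> (norm x)\<^sup>2 + (norm y)\<^sup>2"
    using two_mult_Re_cinner_le[of 1 x "\<i> *\<^sub>C y"] two_mult_Re_cinner_le[of "-1" x "\<i> *\<^sub>C y"]
    by (simp add: cinner_scaleC_right norm_scaleC)
  ultimately show ?thesis
    using cmod_le[of "cinner x y"] by linarith
qed

lemma bounded_clinear_add: "bounded_clinear T \<Longrightarrow> T (x + y) = T x + T y"
  by (simp add: bounded_clinear_def)

lemma bounded_clinear_scaleC: "bounded_clinear T \<Longrightarrow> T (c *\<^sub>C x) = c *\<^sub>C T x"
  by (simp add: bounded_clinear_def)

lemma bounded_clinear_scaleR: "bounded_clinear T \<Longrightarrow> T (r *\<^sub>R x) = r *\<^sub>R T x"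
  by (simp add: bounded_clinear_def scaleR_scaleC)

lemma bounded_clinear_bounded_linear: "bounded_clinear T \<Longrightarrow> bounded_linear T"
  unfolding bounded_clinear_def
  by (metis bounded_linear_intro scaleR_scaleC)

lemma bounded_clinear_diff: "bounded_clinear T \<Longrightarrow> T (x - y) = T x - T y"
  by (rule linear_diff[OF bounded_linear.linear[OF bounded_clinear_bounded_linear]])

section \<open>Positive operators\<close>

lemma positive_op_bounded_clinear: "positive_op A \<Longrightarrow> bounded_clinear A"
  by (simp add: positive_op_def)

lemma positive_op_Re_cinner_nonneg: "positive_op A \<Longrightarrow> 0 \<le> Re (cinner (A x) x)"
  by (simp add: positive_op_def)

lemma positive_op_cinner_commute:
  assumes "positive_op A"
  shows "cinner (A x) y = cinner x (A y)"
proof -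
  have lin: "bounded_clinear A" using assms by (rule positive_op_bounded_clinear)
  have diag: "cinner (A u) u = cinner u (A u)" for u
  proof -
    have "Im (cinner (A u) u) = 0" using assms by (simp add: positive_op_def)
    hence "cnj (cinner (A u) u) = cinner (A u) u" by (simp add: complex_eq_iff)
    thus ?thesis by (metis cinner_commute)
  qed
  have "cinner (A (x + y)) (x + y) = cinner (x + y) (A (x + y))" by (rule diag)
  hence sum: "cinner (A x) y + cinner (A y) x = cinner x (A y) + cinner y (A x)"
    using diag[of x] diag[of y]
    by (simp add: bounded_clinear_add[OF lin] cinner_add_left cinner_add_right algebra_simps)
  have "cinner (A (x + \<i> *\<^sub>C y)) (x + \<i> *\<^sub>C y) = cinner (x + \<i> *\<^sub>C y) (A (x + \<i> *\<^sub>C y))"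
    by (rule diag)
  hence "\<i> * (cinner (A x) y - cinner (A y) x) = \<i> * (cinner x (A y) - cinner y (A x))"
    using diag[of x] diag[of y]
    by (simp add: bounded_clinear_add[OF lin] bounded_clinear_scaleC[OF lin] cinner_add_left
        cinner_add_right cinner_scaleC_left cinner_scaleC_right algebra_simps)
  hence "cinner (A x) y - cinner (A y) x = cinner x (A y) - cinner y (A x)" by simp
  from arg_cong2[OF sum this, of "(+)"] show ?thesis by simp
qed

lemma positive_op_norm_sq_le:
  fixes C :: "'a::complex_inner \<Rightarrow> 'a"
  assumes pos: "positive_op C" and M: "0 < M" "\<And>x. norm (C x) \<le> M * norm x"
  shows "(norm (C x))\<^sup>2 \<le> M * Re (cinner (C x) x)"
proof -
  have lin: "bounded_clinear C" using pos by (rule positive_op_bounded_clinear)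
  define z where "z = C x"
  define s where "s = 1 / M"
  have "2 * M * Re (cinner (C z) z) \<le> (norm (C z))\<^sup>2 + M\<^sup>2 * (norm z)\<^sup>2"
    by (rule two_mult_Re_cinner_le)
  also have "(norm (C z))\<^sup>2 \<le> (M * norm z)\<^sup>2"
    using M by (simp add: power_mono)
  finally have Cz: "Re (cinner (C z) z) \<le> M * (norm z)\<^sup>2"
    using M(1) by (simp add: power2_eq_square)
  \<comment> \<open>positivity of \<open>C\<close> at \<open>x - C x / M\<close>\<close>
  have "0 \<le> Re (cinner (C (x - s *\<^sub>R z)) (x - s *\<^sub>R z))"
    using pos by (rule positive_op_Re_cinner_nonneg)
  also have "cinner (C (x - s *\<^sub>R z)) (x - s *\<^sub>R z) =
      cinner (C x) x - s * cinner (C x) z - s * cinner (C z) x + s\<^sup>2 * cinner (C z) z"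
    by (simp add: bounded_clinear_diff[OF lin] bounded_clinear_scaleR[OF lin] cinner_diff_left
        cinner_diff_right cinner_scaleR_left cinner_scaleR_right algebra_simps power2_eq_square)
  also have "cinner (C z) x = cinner z (C x)"
    using pos by (rule positive_op_cinner_commute)
  finally have "0 \<le> Re (cinner (C x) x) - 2 * s * (norm z)\<^sup>2 + s\<^sup>2 * Re (cinner (C z) z)"
    by (simp add: z_def power2_norm_eq_cinner)
  also have "\<dots> \<le> Re (cinner (C x) x) - 2 * s * (norm z)\<^sup>2 + s\<^sup>2 * (M * (norm z)\<^sup>2)"
    using Cz by (simp add: mult_left_mono)
  also have "\<dots> = Re (cinner (C x) x) - (norm z)\<^sup>2 / M"
    using M(1) by (simp add: s_def field_simps power2_eq_square)
  finally show ?thesis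
    using M(1) by (simp add: z_def field_simps)
qed

lemma positive_op_norm_scaled_diff_le:
  fixes C :: "'a::complex_inner \<Rightarrow> 'a"
  assumes pos: "positive_op C" and M: "0 < M" "\<And>x. norm (C x) \<le> M * norm x"
  shows "(norm (M *\<^sub>R x - C x))\<^sup>2 \<le> M\<^sup>2 * (norm x)\<^sup>2"
proof -
  have "(norm (M *\<^sub>R x - C x))\<^sup>2 = M\<^sup>2 * (norm x)\<^sup>2 + (norm (C x))\<^sup>2 - 2 * M * Re (cinner (C x) x)"
    using M(1) by (simp add: power2_norm_diff cinner_scaleR_left Re_cinner_commute[of x]
        power_mult_distrib)
  moreover have "0 \<le> M * Re (cinner (C x) x)"
    using positive_op_Re_cinner_nonneg[OF pos, of x] M(1) by simp
  ultimately show ?thesis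
    using positive_op_norm_sq_le[OF assms, of x] by linarith
qed

lemma positive_op_norm_scaled_add_ge:
  fixes B :: "'a::complex_inner \<Rightarrow> 'a"
  assumes pos: "positive_op B" and "0 \<le> M" and below: "c * (norm v)\<^sup>2 \<le> (norm (B v))\<^sup>2"
  shows "(M\<^sup>2 + c) * (norm v)\<^sup>2 \<le> (norm (M *\<^sub>R v + B v))\<^sup>2"
proof -
  have "(norm (M *\<^sub>R v + B v))\<^sup>2 = M\<^sup>2 * (norm v)\<^sup>2 + (norm (B v))\<^sup>2 + 2 * M * Re (cinner (B v) v)"
    by (simp add: power2_norm_add cinner_scaleR_left Re_cinner_commute[of v] power_mult_distrib)
  moreover have "0 \<le> M * Re (cinner (B v) v)"
    using positive_op_Re_cinner_nonneg[OF pos, of v] \<open>0 \<le> M\<close> by simp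
  ultimately show ?thesis
    using below by (simp add: distrib_right)
qed

lemma invertible_op_bounded_below:
  assumes "invertible_op B"
  obtains c where "0 < c" "\<And>v. c * (norm v)\<^sup>2 \<le> (norm (B v))\<^sup>2"
proof -
  obtain Binv where Binv: "bounded_clinear Binv" "\<And>x. Binv (B x) = x"
    using assms by (auto simp: invertible_op_def)
  obtain K where K: "0 < K" "\<And>x. norm (Binv x) \<le> norm x * K"
    using bounded_linear.pos_bounded[OF bounded_clinear_bounded_linear[OF Binv(1)]] by blast
  have "(norm v)\<^sup>2 \<le> (K * norm (B v))\<^sup>2" for v
    using K(2)[of "B v"] Binv(2) by (simp add: power_mono mult.commute)
  hence "1 / K\<^sup>2 * (norm v)\<^sup>2 \<le> (norm (B v))\<^sup>2" for v
    using K(1) by (simp add: field_simps power_mult_distrib)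
  thus ?thesis using K(1) by (intro that[of "1 / K\<^sup>2"]) auto
qed

lemma bounded_linear_eq_0_if_norm_sq_le:
  assumes lin: "bounded_linear D" and r: "0 \<le> r" "r < 1"
    and le: "\<And>x. (norm (D x))\<^sup>2 \<le> r * (onorm D * norm x)\<^sup>2"
  shows "D x = 0"
proof -
  have K: "0 \<le> onorm D" using lin by (rule onorm_pos_le)
  have "norm (D y) \<le> sqrt r * onorm D * norm y" for y
  proof (rule power2_le_imp_le)
    show "(norm (D y))\<^sup>2 \<le> (sqrt r * onorm D * norm y)\<^sup>2"
      using le[of y] r(1) by (simp add: power_mult_distrib mult.assoc)
  qed (use K r in simp)
  hence "onorm D \<le> sqrt r * onorm D"
    using K r by (intro onorm_bound) auto
  hence "(1 - sqrt r) * onorm D \<le> 0" by (simp add: algebra_simps)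
  moreover have "0 < 1 - sqrt r" using r by simp
  ultimately have "onorm D = 0"
    using K by (simp add: mult_le_0_iff)
  thus ?thesis using onorm_eq_0[OF lin] by simp
qed

text \<open>With \<open>D = C - B\<close> the hypothesis gives \<open>B D = - D C\<close>, i.e. \<open>(M + B) D = D (M - C)\<close>. As
  \<open>M + B\<close> is bounded below by \<open>sqrt (M\<^sup>2 + c)\<close> while \<open>\<parallel>M - C\<parallel> \<le> M\<close>, the operator norm of \<open>D\<close>
  is at most \<open>M / sqrt (M\<^sup>2 + c)\<close> times itself.\<close>
lemma positive_op_sqrt_unique:
  fixes B C :: "'a::complex_inner \<Rightarrow> 'a"
  assumes posB: "positive_op B" and posC: "positive_op C" and inv: "invertible_op B"
    and sq: "\<And>x. B (B x) = C (C x)"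
  shows "B = C"
proof -
  have linB: "bounded_clinear B" and linC: "bounded_clinear C"
    using posB posC by (simp_all add: positive_op_bounded_clinear)
  obtain c where c: "0 < c" "\<And>v. c * (norm v)\<^sup>2 \<le> (norm (B v))\<^sup>2"
    using invertible_op_bounded_below[OF inv] by blast
  obtain M where M: "0 < M" "\<And>x. norm (C x) \<le> M * norm x"
    using bounded_linear.pos_bounded[OF bounded_clinear_bounded_linear[OF linC]]
    by (auto simp: mult.commute)
  define D where "D x = C x - B x" for x
  have linD: "bounded_linear D"
    unfolding D_def[abs_def] using linB linC
    by (intro bounded_linear_sub bounded_clinear_bounded_linear)
  have intertwine: "M *\<^sub>R D x + B (D x) = D (M *\<^sub>R x - C x)" for x
    using sq[of x]
    by (simp add: D_def bounded_clinear_diff[OF linB] bounded_clinear_diff[OF linC]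
        bounded_clinear_scaleR[OF linB] bounded_clinear_scaleR[OF linC] algebra_simps)
  have contraction: "(M\<^sup>2 + c) * (norm (D x))\<^sup>2 \<le> M\<^sup>2 * (onorm D * norm x)\<^sup>2" for x
  proof -
    have "(M\<^sup>2 + c) * (norm (D x))\<^sup>2 \<le> (norm (D (M *\<^sub>R x - C x)))\<^sup>2"
      using positive_op_norm_scaled_add_ge[OF posB _ c(2), of M "D x"] M(1) intertwine[of x]
      by simp
    also have "\<dots> \<le> (onorm D)\<^sup>2 * (norm (M *\<^sub>R x - C x))\<^sup>2"
      using onorm[OF linD] by (simp add: power_mono flip: power_mult_distrib)
    also have "\<dots> \<le> (onorm D)\<^sup>2 * (M\<^sup>2 * (norm x)\<^sup>2)"
      using positive_op_norm_scaled_diff_le[OF posC M] by (simp add: mult_left_mono)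
    finally show ?thesis by (simp add: power_mult_distrib algebra_simps)
  qed
  have pos: "0 < M\<^sup>2 + c"
    using c(1) by (simp add: add_nonneg_pos)
  have "D x = 0" for x
  proof (rule bounded_linear_eq_0_if_norm_sq_le[OF linD, where r = "M\<^sup>2 / (M\<^sup>2 + c)"])
    show "0 \<le> M\<^sup>2 / (M\<^sup>2 + c)" "M\<^sup>2 / (M\<^sup>2 + c) < 1"
      using c(1) pos by (simp_all add: divide_less_eq_1_pos)
    show "(norm (D y))\<^sup>2 \<le> M\<^sup>2 / (M\<^sup>2 + c) * (onorm D * norm y)\<^sup>2" for y
      using contraction[of y] pos by (simp add: pos_le_divide_eq mult.commute mult.left_commute)
  qed
  thus ?thesis by (auto simp: D_def fun_eq_iff)
qed

lemma positive_op_four_term_norm_identity: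
  fixes B :: "'a::complex_inner \<Rightarrow> 'a" and t :: real
  assumes pos: "positive_op B"
  shows "(norm (t *\<^sub>R B (B a)))\<^sup>2 + (norm (B a - t\<^sup>2 *\<^sub>R B (B (B a))))\<^sup>2
      + (norm (t ^ 3 *\<^sub>R B w - t *\<^sub>R B (B a)))\<^sup>2 + (norm (t\<^sup>2 *\<^sub>R w))\<^sup>2
    = (norm (B a))\<^sup>2 + t ^ 4 * (norm (B (B (B a)) - w))\<^sup>2 + t ^ 6 * (norm (B w))\<^sup>2"
proof -
  have r1: "Re (cinner (B a) (B (B (B a)))) = (norm (B (B a)))\<^sup>2"
    using positive_op_cinner_commute[OF pos, of "B a" "B (B a)"] by (simp add: power2_norm_eq_cinner)
  have r2: "Re (cinner (B w) (B (B a))) = Re (cinner w (B (B (B a))))"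
    using positive_op_cinner_commute[OF pos, of w "B (B a)"] by simp
  have "(norm (B a - t\<^sup>2 *\<^sub>R B (B (B a))))\<^sup>2
      = (norm (B a))\<^sup>2 + t ^ 4 * (norm (B (B (B a))))\<^sup>2 - 2 * t\<^sup>2 * (norm (B (B a)))\<^sup>2"
    by (simp add: power2_norm_diff cinner_scaleR_right r1 power_mult_distrib flip: power_mult)
  moreover have "(norm (t ^ 3 *\<^sub>R B w - t *\<^sub>R B (B a)))\<^sup>2
      = t ^ 6 * (norm (B w))\<^sup>2 + t\<^sup>2 * (norm (B (B a)))\<^sup>2 - 2 * t ^ 4 * Re (cinner w (B (B (B a))))"
    by (simp add: power2_norm_diff cinner_scaleR_left cinner_scaleR_right r2 power_mult_distrib
        flip: power_mult) (simp add: eval_nat_numeral algebra_simps)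
  moreover have "(norm (B (B (B a)) - w))\<^sup>2
      = (norm (B (B (B a))))\<^sup>2 + (norm w)\<^sup>2 - 2 * Re (cinner w (B (B (B a))))"
    by (simp add: power2_norm_diff Re_cinner_commute[of w])
  ultimately show ?thesis
    by (simp add: power_mult_distrib flip: power_mult) (simp add: algebra_simps)
qed

section \<open>The sequence space \<open>ell2\<close> and adjoint pairs\<close>

lemma ell2_norm_le_combination:
  fixes u v w :: "nat \<Rightarrow> 'h::complex_inner"
  assumes u: "u \<in> ell2" and v: "v \<in> ell2" and "0 \<le> a" "0 \<le> b"
    and le: "\<And>n. norm (w n) \<le> a * norm (u n) + b * norm (v n)"
  shows "w \<in> ell2"
proof -
  have "(norm (w n))\<^sup>2 \<le> 2 * a\<^sup>2 * (norm (u n))\<^sup>2 + 2 * b\<^sup>2 * (norm (v n))\<^sup>2" for n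
  proof -
    have "(norm (w n))\<^sup>2 \<le> (a * norm (u n) + b * norm (v n))\<^sup>2"
      using le[of n] by (simp add: power_mono)
    also have "\<dots> \<le> 2 * a\<^sup>2 * (norm (u n))\<^sup>2 + 2 * b\<^sup>2 * (norm (v n))\<^sup>2"
      using zero_le_power2[of "a * norm (u n) - b * norm (v n)"]
      by (simp add: power2_eq_square algebra_simps)
    finally show ?thesis .
  qed
  moreover have "summable (\<lambda>n. 2 * a\<^sup>2 * (norm (u n))\<^sup>2 + 2 * b\<^sup>2 * (norm (v n))\<^sup>2)"
    using u v by (intro summable_add summable_mult) (auto simp: ell2_def)
  ultimately show ?thesis
    unfolding ell2_def by (auto intro: summable_comparison_test'[where N = 0])
qed

lemma ell2_add_scaleC:
  "u \<in> ell2 \<Longrightarrow> v \<in> ell2 \<Longrightarrow> (\<lambda>n. u n + c *\<^sub>C v n) \<in> ell2"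
  by (rule ell2_norm_le_combination[of u v 1 "cmod c"])
    (auto simp: norm_scaleC intro: order_trans[OF norm_triangle_ineq])

lemma ell2_diff: "u \<in> ell2 \<Longrightarrow> v \<in> ell2 \<Longrightarrow> (\<lambda>n. u n - v n) \<in> ell2"
  by (rule ell2_norm_le_combination[of u v 1 1]) (auto intro: norm_triangle_ineq4)

lemma ell2_finite_support: "finite N \<Longrightarrow> (\<And>n. n \<notin> N \<Longrightarrow> x n = 0) \<Longrightarrow> x \<in> ell2"
  unfolding ell2_def by (auto intro: summable_finite)

lemma summable_cinner_ell2:
  assumes "u \<in> ell2" "v \<in> ell2"
  shows "summable (\<lambda>n. cinner (u n) (v n))"
proof (rule summable_comparison_test'[where N = 0])
  show "summable (\<lambda>n. (norm (u n))\<^sup>2 + (norm (v n))\<^sup>2)"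
    using assms by (intro summable_add) (auto simp: ell2_def)
qed (simp add: cmod_cinner_le)

lemma l2inner_add_scaleC_left:
  assumes "u \<in> ell2" "v \<in> ell2" "y \<in> ell2"
  shows "l2inner (\<lambda>n. u n + c *\<^sub>C v n) y = l2inner u y + cnj c * l2inner v y"
  using summable_cinner_ell2[OF assms(1,3)] summable_cinner_ell2[OF assms(2,3)]
  by (simp add: l2inner_def cinner_add_left cinner_scaleC_left suminf_add summable_mult
      flip: suminf_mult)

lemma l2inner_add_scaleC_right:
  assumes "u \<in> ell2" "v \<in> ell2" "y \<in> ell2"
  shows "l2inner y (\<lambda>n. u n + c *\<^sub>C v n) = l2inner y u + c * l2inner y v"
  using summable_cinner_ell2[OF assms(3,1)] summable_cinner_ell2[OF assms(3,2)]
  by (simp add: l2inner_def cinner_add_right cinner_scaleC_right suminf_add summable_mult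
      flip: suminf_mult)

lemma l2inner_diff_left:
  assumes "u \<in> ell2" "v \<in> ell2" "y \<in> ell2"
  shows "l2inner (\<lambda>n. u n - v n) y = l2inner u y - l2inner v y"
  using summable_cinner_ell2[OF assms(1,3)] summable_cinner_ell2[OF assms(2,3)]
  by (simp add: l2inner_def cinner_diff_left suminf_diff)

lemma l2inner_diff_right:
  assumes "u \<in> ell2" "v \<in> ell2" "y \<in> ell2"
  shows "l2inner y (\<lambda>n. u n - v n) = l2inner y u - l2inner y v"
  using summable_cinner_ell2[OF assms(3,1)] summable_cinner_ell2[OF assms(3,2)]
  by (simp add: l2inner_def cinner_diff_right suminf_diff)

lemma l2inner_commute:
  assumes "u \<in> ell2" "v \<in> ell2"
  shows "l2inner u v = cnj (l2inner v u)"
proof -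
  have "(\<lambda>n. cnj (cinner (v n) (u n))) sums cnj (l2inner v u)"
    unfolding l2inner_def using summable_cinner_ell2[OF assms(2,1)]
    by (intro sums_cnj[THEN iffD2] summable_sums)
  thus ?thesis
    unfolding l2inner_def by (simp flip: cinner_commute add: sums_iff)
qed

lemma Re_l2inner_self:
  assumes "u \<in> ell2"
  shows "Re (l2inner u u) = (\<Sum>n. (norm (u n))\<^sup>2)"
proof -
  have "(\<lambda>n. cinner (u n) (u n)) sums l2inner u u"
    unfolding l2inner_def using summable_cinner_ell2[OF assms assms] by (rule summable_sums)
  hence "(\<lambda>n. (norm (u n))\<^sup>2) sums Re (l2inner u u)"
    by (simp add: sums_complex_iff power2_norm_eq_cinner)
  thus ?thesis by (rule sums_unique)
qed

lemma l2inner_self_eq_0: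
  assumes "u \<in> ell2" "l2inner u u = 0"
  shows "u = (\<lambda>n. 0)"
proof -
  have "(\<Sum>n. (norm (u n))\<^sup>2) = 0"
    using Re_l2inner_self[OF assms(1)] assms(2) by simp
  thus ?thesis
    using assms(1) by (simp add: ell2_def suminf_eq_zero_iff fun_eq_iff)
qed

definition l2_adjoint_pair ::
    "((nat \<Rightarrow> 'h::complex_inner) \<Rightarrow> (nat \<Rightarrow> 'h)) \<Rightarrow> ((nat \<Rightarrow> 'h) \<Rightarrow> (nat \<Rightarrow> 'h)) \<Rightarrow> bool" where
  "l2_adjoint_pair T S \<longleftrightarrow> (\<forall>x\<in>ell2. T x \<in> ell2) \<and> (\<forall>y\<in>ell2. S y \<in> ell2) \<and>
     (\<forall>x\<in>ell2. \<forall>y\<in>ell2. l2inner (T x) y = l2inner x (S y))"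

lemma l2_adjoint_pair_comp:
  "l2_adjoint_pair T S \<Longrightarrow> l2_adjoint_pair T' S' \<Longrightarrow> l2_adjoint_pair (\<lambda>x. T (T' x)) (\<lambda>y. S' (S y))"
  by (simp add: l2_adjoint_pair_def)

lemma l2_adjoint_pair_add_scaleC:
  assumes "l2_adjoint_pair T S" "l2_adjoint_pair T' S'"
  shows "l2_adjoint_pair (\<lambda>x n. T x n + c *\<^sub>C T' x n) (\<lambda>y n. S y n + cnj c *\<^sub>C S' y n)"
  using assms
  by (auto simp: l2_adjoint_pair_def ell2_add_scaleC l2inner_add_scaleC_left l2inner_add_scaleC_right)

lemma l2_adjoint_eq:
  assumes adj: "l2_adjoint_pair T S" and y: "y \<in> ell2"
  shows "l2_adjoint T y = S y"
proof -
  let ?P = "\<lambda>S'. (\<forall>y\<in>ell2. S' y \<in> ell2) \<and> (\<forall>x\<in>ell2. \<forall>y\<in>ell2. l2inner (T x) y = l2inner x (S' y))"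
  have "?P (l2_adjoint T)"
    unfolding l2_adjoint_def using adj by (intro someI[of ?P S]) (simp add: l2_adjoint_pair_def)
  hence adjT: "l2_adjoint T y \<in> ell2" "\<And>x. x \<in> ell2 \<Longrightarrow> l2inner (T x) y = l2inner x (l2_adjoint T y)"
    using y by auto
  have Sy: "S y \<in> ell2" using adj y by (simp add: l2_adjoint_pair_def)
  define d where "d n = l2_adjoint T y n - S y n" for n
  have d: "d \<in> ell2" unfolding d_def[abs_def] using adjT(1) Sy by (rule ell2_diff)
  have "l2inner d d = l2inner d (l2_adjoint T y) - l2inner d (S y)"
    unfolding d_def[abs_def] using adjT(1) Sy d[unfolded d_def[abs_def]] by (rule l2inner_diff_right)
  also have "\<dots> = 0"
    using adjT(2)[OF d] adj d y by (simp add: l2_adjoint_pair_def)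
  finally show ?thesis
    using l2inner_self_eq_0[OF d] by (simp add: d_def fun_eq_iff)
qed

lemma l2_hyponormal_norm_adjoint_le:
  assumes adj: "l2_adjoint_pair T S" and hyp: "l2_hyponormal T" and x: "x \<in> ell2"
  shows "(\<Sum>n. (norm (S x n))\<^sup>2) \<le> (\<Sum>n. (norm (T x n))\<^sup>2)"
proof -
  have Tx: "T x \<in> ell2" and Sx: "S x \<in> ell2" and STx: "S (T x) \<in> ell2" and TSx: "T (S x) \<in> ell2"
    using adj x by (auto simp: l2_adjoint_pair_def)
  have "0 \<le> Re (l2inner (\<lambda>n. l2_adjoint T (T x) n - T (l2_adjoint T x) n) x)"
    using hyp x by (simp add: l2_hyponormal_def l2_positive_def)
  also have "(\<lambda>n. l2_adjoint T (T x) n - T (l2_adjoint T x) n) = (\<lambda>n. S (T x) n - T (S x) n)"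
    using l2_adjoint_eq[OF adj Tx] l2_adjoint_eq[OF adj x] by simp
  also have "l2inner \<dots> x = cnj (l2inner x (S (T x))) - l2inner (T (S x)) x"
    using STx TSx x by (simp add: l2inner_diff_left l2inner_commute[OF STx x])
  also have "\<dots> = cnj (l2inner (T x) (T x)) - l2inner (S x) (S x)"
    using adj x Tx Sx by (simp add: l2_adjoint_pair_def)
  finally show ?thesis
    using Re_l2inner_self[OF Tx] Re_l2inner_self[OF Sx] by simp
qed

section \<open>Operator-valued weighted shifts\<close>

definition op_weighted_shift_adj :: "(nat \<Rightarrow> 'h \<Rightarrow> 'h) \<Rightarrow> (nat \<Rightarrow> 'h::complex_inner) \<Rightarrow> (nat \<Rightarrow> 'h)" where
  "op_weighted_shift_adj A y = (\<lambda>k. A k (y (Suc k)))"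

lemma ell2_op_weighted_shift:
  fixes A :: "nat \<Rightarrow> 'h::complex_inner \<Rightarrow> 'h"
  assumes bound: "\<And>k x. norm (A k x) \<le> M * norm x" and x: "x \<in> ell2"
  shows "op_weighted_shift A x \<in> ell2"
proof -
  have "summable (\<lambda>n. (norm (op_weighted_shift A x (Suc n)))\<^sup>2)"
  proof (rule summable_comparison_test'[where N = 0])
    show "summable (\<lambda>n. M\<^sup>2 * (norm (x n))\<^sup>2)"
      using x by (intro summable_mult) (simp add: ell2_def)
    show "norm ((norm (op_weighted_shift A x (Suc n)))\<^sup>2) \<le> M\<^sup>2 * (norm (x n))\<^sup>2" for n
      using bound[of n "x n"] norm_ge_zero[of "A n (x n)"]
      by (simp add: op_weighted_shift_def power_mono flip: power_mult_distrib)
  qed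
  thus ?thesis
    using summable_Suc_iff[of "\<lambda>n. (norm (op_weighted_shift A x n))\<^sup>2"] by (simp add: ell2_def)
qed

lemma ell2_op_weighted_shift_adj:
  fixes A :: "nat \<Rightarrow> 'h::complex_inner \<Rightarrow> 'h"
  assumes bound: "\<And>k x. norm (A k x) \<le> M * norm x" and y: "y \<in> ell2"
  shows "op_weighted_shift_adj A y \<in> ell2"
proof -
  have "summable (\<lambda>n. (norm (op_weighted_shift_adj A y n))\<^sup>2)"
  proof (rule summable_comparison_test'[where N = 0])
    show "summable (\<lambda>n. M\<^sup>2 * (norm (y (Suc n)))\<^sup>2)"
      using y summable_Suc_iff[of "\<lambda>n. (norm (y n))\<^sup>2"] by (intro summable_mult) (simp add: ell2_def)
    show "norm ((norm (op_weighted_shift_adj A y n))\<^sup>2) \<le> M\<^sup>2 * (norm (y (Suc n)))\<^sup>2" for n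
      using bound[of n "y (Suc n)"] norm_ge_zero[of "A n (y (Suc n))"]
      by (simp add: op_weighted_shift_adj_def power_mono flip: power_mult_distrib)
  qed
  thus ?thesis by (simp add: ell2_def)
qed

lemma l2_adjoint_pair_op_weighted_shift:
  fixes A :: "nat \<Rightarrow> 'h::complex_inner \<Rightarrow> 'h"
  assumes pos: "\<And>k. positive_op (A k)" and bound: "\<And>k x. norm (A k x) \<le> M * norm x"
  shows "l2_adjoint_pair (op_weighted_shift A) (op_weighted_shift_adj A)"
  unfolding l2_adjoint_pair_def
proof (intro conjI ballI)
  fix x y :: "nat \<Rightarrow> 'h" assume x: "x \<in> ell2" and y: "y \<in> ell2"
  define f where "f n = cinner (op_weighted_shift A x n) (y n)" for n
  have "summable f"
    unfolding f_def using ell2_op_weighted_shift[OF bound x] y by (rule summable_cinner_ell2)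
  moreover have "f 0 = 0" by (simp add: f_def op_weighted_shift_def)
  moreover have "f (Suc n) = cinner (x n) (op_weighted_shift_adj A y n)" for n
    by (simp add: f_def op_weighted_shift_def op_weighted_shift_adj_def positive_op_cinner_commute[OF pos])
  ultimately show "l2inner (op_weighted_shift A x) y = l2inner x (op_weighted_shift_adj A y)"
    unfolding l2inner_def f_def[symmetric] using suminf_split_head[of f] by simp
qed (use ell2_op_weighted_shift[OF bound] ell2_op_weighted_shift_adj[OF bound] in auto)

lemma le_zero_if_pow4_le_pow6:
  fixes d R :: real
  assumes le: "\<And>t. 0 < t \<Longrightarrow> t ^ 4 * d \<le> t ^ 6 * R"
  shows "d \<le> 0"
proof (rule ccontr)
  assume "\<not> d \<le> 0"
  hence d: "0 < d" by simp
  have le': "d \<le> t\<^sup>2 * R" if "0 < t" for t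
  proof -
    have "t ^ 6 * R = t ^ 4 * (t\<^sup>2 * R)" by algebra
    thus ?thesis using le[OF that] that by (metis mult_le_cancel_left_pos zero_less_power)
  qed
  hence R: "0 < R" using d le'[of 1] by simp
  define t where "t = sqrt (d / (2 * R))"
  have "0 < t" and "t\<^sup>2 * R = d / 2"
    using d R by (simp_all add: t_def)
  thus False using le' d by fastforce
qed

definition three_point_vector :: "nat \<Rightarrow> 'a \<Rightarrow> 'a \<Rightarrow> 'a \<Rightarrow> nat \<Rightarrow> 'a::zero" where
  "three_point_vector m a b c k =
     (if k = Suc m then a else if k = Suc (Suc m) then b else if k = Suc (Suc (Suc m)) then c else 0)"

locale quad_hyponormal_shift =
  fixes A :: "nat \<Rightarrow> 'h::complex_inner \<Rightarrow> 'h"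
  assumes positive: "\<And>k. positive_op (A k)"
    and invertible: "\<And>k. invertible_op (A k)"
    and bounded: "bdd_above (range (\<lambda>k. onorm (A k)))"
    and quad_hyponormal: "l2_quad_hyponormal (op_weighted_shift A)"
begin

lemma weight_linear [simp]:
  "A k (v + w) = A k v + A k w" "A k (r *\<^sub>R v) = r *\<^sub>R A k v" "A k (v - w) = A k v - A k w"
  "A k (- v) = - A k v" "A k 0 = 0"
  using bounded_linear.linear[OF bounded_clinear_bounded_linear[OF positive_op_bounded_clinear[OF positive]]]
  by (simp_all add: linear_add linear_cmul linear_diff linear_neg linear_0)

lemma weight_uniform_bound:
  obtains M where "\<And>k x. norm (A k x) \<le> M * norm x"
proof -
  obtain M where M: "\<And>k. onorm (A k) \<le> M"
    using bounded by (auto simp: bdd_above_def)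
  have "norm (A k x) \<le> M * norm x" for k x
    using onorm[OF bounded_clinear_bounded_linear[OF positive_op_bounded_clinear[OF positive]]]
      mult_right_mono[OF M norm_ge_zero]
    by (rule order_trans)
  thus thesis by (rule that)
qed

lemma norm_quadratic_adjoint_le:
  assumes x: "x \<in> ell2"
  shows "(\<Sum>j. (norm (A j (x (Suc j)) + t *\<^sub>R A j (A (Suc j) (x (Suc (Suc j))))))\<^sup>2)
    \<le> (\<Sum>j. (norm (op_weighted_shift A x j + t *\<^sub>R op_weighted_shift A (op_weighted_shift A x) j))\<^sup>2)"
proof -
  obtain M where M: "\<And>k x. norm (A k x) \<le> M * norm x"
    using weight_uniform_bound by blast
  let ?c = "complex_of_real t"
  let ?T = "\<lambda>x n. op_weighted_shift A x n + ?c *\<^sub>C op_weighted_shift A (op_weighted_shift A x) n"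
  let ?S = "\<lambda>y n. op_weighted_shift_adj A y n + cnj ?c *\<^sub>C op_weighted_shift_adj A (op_weighted_shift_adj A y) n"
  have W: "l2_adjoint_pair (op_weighted_shift A) (op_weighted_shift_adj A)"
    using positive M by (rule l2_adjoint_pair_op_weighted_shift)
  have adj: "l2_adjoint_pair ?T ?S"
    using l2_adjoint_pair_add_scaleC[OF W l2_adjoint_pair_comp[OF W W]] .
  have "l2_hyponormal ?T"
    using quad_hyponormal by (simp add: l2_quad_hyponormal_def)
  from l2_hyponormal_norm_adjoint_le[OF adj this x] show ?thesis
    by (simp add: op_weighted_shift_adj_def scaleR_scaleC)
qed

lemma three_point_vector_ineq:
  fixes m :: nat and a b c :: 'h
  assumes "finite J"
  defines "x \<equiv> three_point_vector m a b c"
  shows "(\<Sum>j\<in>J. (norm (A j (x (Suc j)) + t *\<^sub>R A j (A (Suc j) (x (Suc (Suc j))))))\<^sup>2)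
    \<le> (norm (A (Suc m) a))\<^sup>2
      + (norm (A (Suc (Suc m)) b + t *\<^sub>R A (Suc (Suc m)) (A (Suc m) a)))\<^sup>2
      + (norm (A (Suc (Suc (Suc m))) c + t *\<^sub>R A (Suc (Suc (Suc m))) (A (Suc (Suc m)) b)))\<^sup>2
      + (norm (t *\<^sub>R A (Suc (Suc (Suc (Suc m)))) (A (Suc (Suc (Suc m))) c)))\<^sup>2"
    (is "_ \<le> ?rhs")
proof -
  have x: "x \<in> ell2"
    by (rule ell2_finite_support[of "{Suc m, Suc (Suc m), Suc (Suc (Suc m))}"])
      (auto simp: x_def three_point_vector_def)
  let ?S = "\<lambda>j. (norm (A j (x (Suc j)) + t *\<^sub>R A j (A (Suc j) (x (Suc (Suc j))))))\<^sup>2"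
  let ?T = "\<lambda>j. (norm (op_weighted_shift A x j + t *\<^sub>R op_weighted_shift A (op_weighted_shift A x) j))\<^sup>2"
  let ?W = "{Suc (Suc m), Suc (Suc (Suc m)), Suc (Suc (Suc (Suc m))), Suc (Suc (Suc (Suc (Suc m))))}"
  have "sum ?S J \<le> (\<Sum>j. ?S j)"
    using assms(1)
    by (intro sum_le_suminf summable_finite[of "{..Suc (Suc m)}"])
      (auto simp: x_def three_point_vector_def split: if_splits)
  also have "\<dots> \<le> (\<Sum>j. ?T j)"
    using x by (rule norm_quadratic_adjoint_le)
  also have "(\<Sum>j. ?T j) = sum ?T ?W"
  proof (rule suminf_finite)
    show "?T j = 0" if "j \<notin> ?W" for j
    proof -
      consider "j = 0" | "j = Suc 0" | i where "j = Suc (Suc i)"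
        by (metis not0_implies_Suc)
      thus ?thesis
        using that by cases (auto simp: op_weighted_shift_def x_def three_point_vector_def)
    qed
  qed simp
  also have "\<dots> = ?rhs"
    by (simp add: op_weighted_shift_def x_def three_point_vector_def)
  finally show ?thesis .
qed

lemma weight_eq_if_sq_eq_on_range:
  assumes "\<And>v. A i (A i (A j v)) = A k (A k (A j v))"
  shows "A i = A k"
proof (rule positive_op_sqrt_unique[OF positive positive invertible])
  obtain Ainv where "\<And>y. A j (Ainv y) = y"
    using invertible[of j] by (auto simp: invertible_op_def)
  thus "A i (A i y) = A k (A k y)" for y
    using assms[of "Ainv y"] by simp
qed

lemma weight_eq_right_step:
  assumes "A (Suc n) = A n" "A (Suc (Suc n)) = A n"
  shows "A (Suc (Suc (Suc n))) = A n"
proof -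
  let ?B = "A n" and ?C = "A (Suc (Suc (Suc n)))"
  have "?B (?B (?B a)) = ?C (?C (?B a))" for a
  proof -
    define w where "w = ?C (?C (?B a))"
    define f where "f = A (Suc (Suc (Suc (Suc (Suc n))))) (A (Suc (Suc (Suc (Suc n)))) (?C (?B a)))"
    \<comment> \<open>\<open>W + t W\<^sup>2\<close> maps this vector to one with the only nonzero entries \<open>?B a\<close> and \<open>t\<^sup>3 f\<close>\<close>
    define x where "x t = three_point_vector (Suc n) a ((- t) *\<^sub>R ?B a) (t\<^sup>2 *\<^sub>R ?C (?B a))" for t
    have "t ^ 4 * (norm (?B (?B (?B a)) - w))\<^sup>2 \<le> t ^ 6 * (norm f)\<^sup>2" if "0 < t" for t
    proof -
      have "(norm (?B a))\<^sup>2 + t ^ 4 * (norm (?B (?B (?B a)) - w))\<^sup>2 + t ^ 6 * (norm (?B w))\<^sup>2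
          = (norm (t *\<^sub>R ?B (?B a)))\<^sup>2 + (norm (?B a - t\<^sup>2 *\<^sub>R ?B (?B (?B a))))\<^sup>2
          + (norm (t ^ 3 *\<^sub>R ?B w - t *\<^sub>R ?B (?B a)))\<^sup>2 + (norm (t\<^sup>2 *\<^sub>R w))\<^sup>2"
        by (rule positive_op_four_term_norm_identity[OF positive, symmetric])
      also have "\<dots> = (\<Sum>j\<in>{n, Suc n, Suc (Suc n), Suc (Suc (Suc n))}.
              (norm (A j (x t (Suc j)) + t *\<^sub>R A j (A (Suc j) (x t (Suc (Suc j))))))\<^sup>2)"
        by (simp add: assms x_def three_point_vector_def w_def power2_eq_square power3_eq_cube mult.assoc)
      also have "\<dots> \<le> (norm (?B a))\<^sup>2 + (norm (t ^ 3 *\<^sub>R f))\<^sup>2"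
        using three_point_vector_ineq[where J = "{n, Suc n, Suc (Suc n), Suc (Suc (Suc n))}"
            and m = "Suc n" and a = a and b = "(- t) *\<^sub>R ?B a" and c = "t\<^sup>2 *\<^sub>R ?C (?B a)" and t = t]
        by (simp add: assms x_def f_def power2_eq_square power3_eq_cube mult.assoc)
      finally have "(norm (?B a))\<^sup>2 + t ^ 4 * (norm (?B (?B (?B a)) - w))\<^sup>2 + t ^ 6 * (norm (?B w))\<^sup>2
          \<le> (norm (?B a))\<^sup>2 + t ^ 6 * (norm f)\<^sup>2"
        by (simp add: power_mult_distrib flip: power_mult)
      moreover have "0 \<le> t ^ 6 * (norm (?B w))\<^sup>2"
        using that by simp
      ultimately show ?thesis by linarith
    qed
    hence "(norm (?B (?B (?B a)) - w))\<^sup>2 \<le> 0"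
      by (rule le_zero_if_pow4_le_pow6)
    thus ?thesis by (simp add: w_def)
  qed
  hence "?B = ?C"
    by (rule weight_eq_if_sq_eq_on_range)
  thus ?thesis by simp
qed

lemma weight_eq_left_step:
  assumes "A (Suc (Suc (Suc m))) = A (Suc (Suc m))" "A (Suc (Suc (Suc (Suc m)))) = A (Suc (Suc m))"
  shows "A (Suc m) = A (Suc (Suc m))"
proof -
  let ?Z = "A m" and ?P = "A (Suc m)" and ?B = "A (Suc (Suc m))"
  obtain Pinv where Pinv: "\<And>y. ?P (Pinv y) = y"
    using invertible[of "Suc m"] by (auto simp: invertible_op_def)
  obtain Zinv where Zinv: "\<And>y. Zinv (?Z y) = y"
    using invertible[of m] by (auto simp: invertible_op_def)
  have "?P (?P (?B v)) = ?B (?B (?B v))" for v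
  proof -
    define u where "u = Pinv (?B (?B (?B v)))"
    have Pu: "?P u = ?B (?B (?B v))"
      by (simp add: u_def Pinv)
    \<comment> \<open>as \<open>?P u = ?B\<^sup>3 v\<close>, the entries of \<open>(W + t W\<^sup>2) x\<close> are the four vectors of
      \<open>positive_op_four_term_norm_identity\<close> for \<open>a = v\<close> and \<open>w = ?B\<^sup>3 v\<close>\<close>
    define x where "x t = three_point_vector m (t\<^sup>2 *\<^sub>R u) ((- t) *\<^sub>R ?B v) v" for t
    have "t ^ 4 * (norm (?Z u - ?Z (?P (?B v))))\<^sup>2 \<le> t ^ 6 * (norm (?B (?B (?B (?B v)))))\<^sup>2"
      if "0 < t" for t
    proof -
      have "t ^ 4 * (norm (?Z u - ?Z (?P (?B v))))\<^sup>2 + (norm (?B v))\<^sup>2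
          = (\<Sum>j\<in>{m, Suc (Suc m)}.
              (norm (A j (x t (Suc j)) + t *\<^sub>R A j (A (Suc j) (x t (Suc (Suc j))))))\<^sup>2)"
        by (simp add: assms x_def three_point_vector_def power2_eq_square power4_eq_xxxx mult.assoc
            power_mult_distrib flip: scaleR_right_diff_distrib)
      also have "\<dots> \<le> (norm (t *\<^sub>R ?B (?B v)))\<^sup>2 + (norm (?B v - t\<^sup>2 *\<^sub>R ?B (?B (?B v))))\<^sup>2
          + (norm (t ^ 3 *\<^sub>R ?B (?B (?B (?B v))) - t *\<^sub>R ?B (?B v)))\<^sup>2
          + (norm (t\<^sup>2 *\<^sub>R ?B (?B (?B v))))\<^sup>2"
        using three_point_vector_ineq[where J = "{m, Suc (Suc m)}" and m = m and a = "t\<^sup>2 *\<^sub>R u"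
            and b = "(- t) *\<^sub>R ?B v" and c = v and t = t]
        by (simp add: assms x_def Pu power2_eq_square power3_eq_cube mult.assoc)
      also have "\<dots> = (norm (?B v))\<^sup>2 + t ^ 4 * (norm (?B (?B (?B v)) - ?B (?B (?B v))))\<^sup>2
          + t ^ 6 * (norm (?B (?B (?B (?B v)))))\<^sup>2"
        by (rule positive_op_four_term_norm_identity[OF positive])
      finally show ?thesis by simp
    qed
    hence "(norm (?Z u - ?Z (?P (?B v))))\<^sup>2 \<le> 0"
      by (rule le_zero_if_pow4_le_pow6)
    hence "?Z u = ?Z (?P (?B v))"
      by simp
    hence "u = ?P (?B v)"
      by (metis Zinv)
    thus ?thesis using Pu by simp
  qed
  thus ?thesis by (rule weight_eq_if_sq_eq_on_range)
qed

lemma weights_eq_right: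
  assumes "A (Suc n) = A n" "A (Suc (Suc n)) = A n"
  shows "A (n + k) = A n"
proof -
  have "A (n + k) = A n \<and> A (Suc (n + k)) = A n \<and> A (Suc (Suc (n + k))) = A n"
  proof (induction k)
    case 0
    thus ?case using assms by simp
  next
    case (Suc k)
    thus ?case using weight_eq_right_step[of "n + k"] by simp
  qed
  thus ?thesis by simp
qed

lemma weights_eq_left:
  assumes "A (Suc n) = A n" "A (Suc (Suc n)) = A n" and "0 < k" "k \<le> n"
  shows "A k = A n"
proof -
  have "k - 1 \<le> n - 1" using assms(4) by simp
  hence "A (Suc (k - 1)) = A n \<and> A (Suc (Suc (k - 1))) = A n \<and> A (Suc (Suc (Suc (k - 1)))) = A n"
  proof (induction rule: inc_induct)
    case base
    thus ?case using assms by (simp add: Suc_diff_1)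
  next
    case (step i)
    thus ?case using weight_eq_left_step[of i] by simp
  qed
  thus ?thesis using assms(3) by simp
qed

end

theorem mainTheorem6:
  fixes A :: "nat \<Rightarrow> 'h::chilbert_space \<Rightarrow> 'h"
    and n :: nat
  assumes separable: "\<exists>D::'h set. countable D \<and> closure D = UNIV"
    and pos: "\<forall>k. positive_op (A k)"
    and inv: "\<forall>k. invertible_op (A k)"
    and bdd: "bdd_above (range (\<lambda>k. onorm (A k)))"
    and qh: "l2_quad_hyponormal (op_weighted_shift A)"
    and eq: "A n = A (n + 1)" "A (n + 1) = A (n + 2)"
  shows "\<forall>k\<ge>1. A k = A n"
proof (intro allI impI)
  fix k :: nat
  assume "k \<ge> 1"
  interpret quad_hyponormal_shift A
    using pos inv bdd qh by unfold_locales auto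
  have flat: "A (Suc n) = A n" "A (Suc (Suc n)) = A n"
    using eq by simp_all
  show "A k = A n"
  proof (cases "n \<le> k")
    case True
    then obtain d where "k = n + d" by (rule less_eqE)
    thus ?thesis using weights_eq_right[OF flat, of d] by (simp only:)
  next
    case False
    thus ?thesis using \<open>k \<ge> 1\<close> by (intro weights_eq_left[OF flat]) simp_all
  qed
qed

end
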